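(* Let a (continuous) fibration of $\mathbb R^n$ by oriented affine $k$-planes be given, with $q=n-k$, and let $p\colon\mathbb R^n\to\mathbb R^n$ send each point $x$ to the point of the fiber through $x$ nearest to the origin. Then the base space $p(\mathbb R^n)$ is a connected, contractible, $q$-dimensional submanifold of $\mathbb R^n$.
   Context: A fibration of $\mathbb R^n$ by oriented affine $k$-planes is a family of pairwise disjoint oriented affine $k$-planes covering $\mathbb R^n$ which forms a locally trivial bundle, i.e. the map sending a point to its fiber is continuous; fibers need not be skew. *)

theory Defs
  imports "HOL-Analysis.Analysis"
begin

text \<open>A frame of a k-dimensional direction in R^n is an injective matrix
  B :: real^'k^'n (columns = basis vectors). An oriented affine k-plane is
  represented by the pair (underlying point set, orientation), where the
  orientation is the set of all positively oriented frames of its direction,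
  i.e. all B ** T with det T > 0.\<close>

definition oplane :: "real^'n \<Rightarrow> real^'k^'n \<Rightarrow> (real^'n) set \<times> (real^'k^'n) set" where
  "oplane a B = (range (\<lambda>t. a + B *v t), {B ** T | T. det T > 0})"

definition frame :: "real^'k^'n \<Rightarrow> bool" where
  "frame B \<longleftrightarrow> inj ((*v) B)"

definition oriented_affine_plane :: "(real^'n) set \<times> (real^'k^'n) set \<Rightarrow> bool" where
  "oriented_affine_plane P \<longleftrightarrow> (\<exists>a B. frame B \<and> P = oplane a B)"

text \<open>The fibers cover R^n (x lies in F x) and
  are pairwise disjoint (any point y of the fiber through x has the same fiber).
  Continuity of F into the space of oriented affine k-planes (quotient topology
  from point+frame data) means that near every point F is given by continuously
  varying base points and frames.\<close>

definition oriented_plane_fibration ::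
    "(real^'n \<Rightarrow> (real^'n) set \<times> (real^'k^'n) set) \<Rightarrow> bool" where
  "oriented_plane_fibration F \<longleftrightarrow>
     (\<forall>x. oriented_affine_plane (F x)) \<and>
     (\<forall>x. x \<in> fst (F x)) \<and>
     (\<forall>x y. y \<in> fst (F x) \<longrightarrow> F y = F x) \<and>
     (\<forall>x. \<exists>U a B. open U \<and> x \<in> U \<and> continuous_on U a \<and> continuous_on U B \<and>
         (\<forall>y\<in>U. frame (B y) \<and> F y = oplane (a y) (B y)))"

definition top_submanifold :: "nat \<Rightarrow> ('a::euclidean_space) set \<Rightarrow> bool" where
  "top_submanifold q S \<longleftrightarrow>
     (\<forall>x\<in>S. \<exists>V. openin (top_of_set S) V \<and> x \<in> V \<and>
        (\<exists>(T::'a set) W. subspace T \<and> dim T = q \<and> openin (top_of_set T) W \<and> V homeomorphic W))"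

end

theory Submission
  imports Defs
begin

text \<open>Locally the fibers are the planes y + range (B y) for a continuous field B of injective
  frames, so the foot p y = y - B y (B y' B y)\<inverse> B y' y of the fiber through y (with ' for the
  transpose) depends continuously on y. Since p x lies on the fiber of x, p is a retraction of
  the whole space onto its image, which is therefore connected and contractible. Near a point y0
  of the image, the normal space N = ker (B y0') of the fiber through y0 meets every nearby fiber
  y + range (B y) in exactly one point w y, depending continuously on y; then y \<mapsto> w y - y0 and
  v \<mapsto> p (y0 + v) are inverse homeomorphisms between a neighbourhood of y0 in the image and an
  open subset of N, and dim N = n - k.\<close>

lemma continuous_on_det [continuous_intros]:
  fixes M :: "'a::topological_space \<Rightarrow> real^'m^'m"
  assumes "continuous_on S M"
  shows "continuous_on S (\<lambda>x. det (M x))"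
  unfolding det_def by (intro continuous_intros assms)

lemma continuous_on_matrix_vector_mult [continuous_intros]:
  fixes M :: "'a::topological_space \<Rightarrow> real^'m^'n"
  assumes "continuous_on S M" "continuous_on S v"
  shows "continuous_on S (\<lambda>x. M x *v v x)"
  unfolding matrix_vector_mult_def by (intro continuous_intros assms)

lemma continuous_on_matrix_matrix_mult [continuous_intros]:
  fixes M :: "'a::topological_space \<Rightarrow> real^'m^'n"
  assumes "continuous_on S M" "continuous_on S N"
  shows "continuous_on S (\<lambda>x. M x ** N x)"
  unfolding matrix_matrix_mult_def by (intro continuous_intros assms)

lemma continuous_on_transpose [continuous_intros]:
  fixes M :: "'a::topological_space \<Rightarrow> real^'m^'n"
  assumes "continuous_on S M"
  shows "continuous_on S (\<lambda>x. transpose (M x))"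
  unfolding transpose_def by (intro continuous_intros assms)

lemma matrix_inv_right:
  assumes "invertible A"
  shows "A ** matrix_inv A = mat 1"
  using someI_ex[OF assms[unfolded invertible_def]] unfolding matrix_inv_def by blast

lemma continuous_on_matrix_inv_mult:
  fixes M :: "'a::topological_space \<Rightarrow> real^'m^'m"
  assumes "continuous_on S M" "continuous_on S b" "\<And>x. x \<in> S \<Longrightarrow> invertible (M x)"
  shows "continuous_on S (\<lambda>x. matrix_inv (M x) *v b x)"
proof -
  let ?cramer = "\<lambda>x. \<chi> k. det (\<chi> i j. if j = k then b x $ i else M x $ i $ j) / det (M x)"
  have "matrix_inv (M x) *v b x = ?cramer x" if "x \<in> S" for x
  proof -
    have "M x *v (matrix_inv (M x) *v b x) = b x"
      using matrix_inv_right[OF assms(3)[OF that]] by (simp add: matrix_vector_mul_assoc)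
    then show ?thesis
      using cramer assms(3)[OF that] invertible_det_nz by blast
  qed
  moreover have "continuous_on S ?cramer"
  proof (intro continuous_on_vec_lambda continuous_on_divide continuous_on_det)
    show "continuous_on S (\<lambda>x. if j = k then b x $ i else M x $ i $ j)" for i j k
      by (cases "j = k") (auto intro!: continuous_intros assms)
  qed (use assms invertible_det_nz in auto)
  ultimately show ?thesis
    using continuous_on_cong by force
qed

lemma inner_transpose_mult:
  fixes B :: "real^'k^'n"
  shows "inner x (transpose B *v y) = inner (B *v x) y"
  by (simp only: dot_lmul_matrix[symmetric] vector_transpose_matrix)

lemma invertible_transpose_mult_self:
  fixes B :: "real^'k^'n"
  assumes "inj ((*v) B)"
  shows "invertible (transpose B ** B)"
proof -
  have "x = 0" if "(transpose B ** B) *v x = 0" for x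
  proof -
    have "inner x ((transpose B ** B) *v x) = inner x (transpose B *v (B *v x))"
      by (simp only: matrix_vector_mul_assoc)
    also have "\<dots> = inner (B *v x) (B *v x)"
      by (rule inner_transpose_mult)
    finally have "inner (B *v x) (B *v x) = 0"
      using that by simp
    then have "B *v x = 0"
      by simp
    then show "x = 0"
      using assms by (simp add: linear_inj_iff_eq_0[OF matrix_vector_mul_linear])
  qed
  then have "inj ((*v) (transpose B ** B))"
    by (simp add: linear_inj_iff_eq_0[OF matrix_vector_mul_linear])
  then show ?thesis
    by (simp add: invertible_left_inverse matrix_left_invertible_injective)
qed

lemma open_invertible_locus:
  fixes M :: "'a::topological_space \<Rightarrow> real^'m^'m"
  assumes "open U" "continuous_on U M"
  shows "open {y \<in> U. invertible (M y)}"
proof -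
  have locus: "{y \<in> U. invertible (M y)} = U \<inter> (\<lambda>y. det (M y)) -` (- {0})"
    unfolding invertible_det_nz by blast
  show ?thesis
    unfolding locus by (rule continuous_open_preimage[OF continuous_on_det[OF assms(2)] assms(1)]) auto
qed

lemma affine_plane_closed_convex:
  fixes B :: "real^'k^'n"
  shows "closed (range (\<lambda>t. a + B *v t))" "convex (range (\<lambda>t. a + B *v t))"
proof -
  have plane: "range (\<lambda>t. a + B *v t) = (+) a ` range ((*v) B)"
    by auto
  have "subspace (range ((*v) B))"
    by (simp add: subspace_UNIV linear_subspace_image)
  then show "closed (range (\<lambda>t. a + B *v t))" "convex (range (\<lambda>t. a + B *v t))"
    unfolding plane by (simp_all add: closed_subspace closed_translation subspace_imp_convex convex_translation)
qed

lemma affine_plane_recenter: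
  fixes B :: "real^'k^'n"
  assumes "b \<in> range (\<lambda>t. a + B *v t)"
  shows "range (\<lambda>t. b + B *v t) = range (\<lambda>t. a + B *v t)"
proof -
  obtain s where b: "b = a + B *v s"
    using assms by blast
  have "b + B *v t = a + B *v (s + t)" "a + B *v t = b + B *v (t - s)" for t
    by (simp_all add: b matrix_vector_right_distrib matrix_vector_mult_diff_distrib)
  then show ?thesis
    by (metis (no_types, lifting) rangeI image_subset_iff subset_antisym)
qed

lemma closest_point_0_affine_plane_orthogonal:
  fixes B :: "real^'k^'n"
  assumes "q \<in> range (\<lambda>t. a + B *v t)" "transpose B *v q = 0"
  shows "closest_point (range (\<lambda>t. a + B *v t)) 0 = q"
proof (rule closest_point_unique[symmetric, OF affine_plane_closed_convex(2,1) assms(1)], intro ballI)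
  fix z assume "z \<in> range (\<lambda>t. a + B *v t)"
  then obtain t where z: "z = q + B *v t"
    using assms(1) affine_plane_recenter by blast
  have "inner q (B *v t) = 0"
    using inner_transpose_mult[of t B q] assms(2) by (simp add: inner_commute)
  then have "inner z z = inner q q + inner (B *v t) (B *v t)"
    unfolding z by (simp add: inner_add inner_commute)
  then show "dist 0 q \<le> dist 0 z"
    by (simp add: norm_le)
qed

lemma closest_point_0_affine_plane:
  fixes B :: "real^'k^'n"
  assumes "inj ((*v) B)"
  shows "closest_point (range (\<lambda>t. a + B *v t)) 0
           = a - B *v (matrix_inv (transpose B ** B) *v (transpose B *v a))"
proof (rule closest_point_0_affine_plane_orthogonal)
  let ?s = "matrix_inv (transpose B ** B) *v (transpose B *v a)"
  have "a - B *v ?s = a + B *v (- ?s)"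
    by (metis diff_0 diff_conv_add_uminus matrix_vector_mult_0_right matrix_vector_mult_diff_distrib)
  then show "a - B *v ?s \<in> range (\<lambda>t. a + B *v t)"
    by auto
  have "transpose B *v (B *v ?s) = transpose B *v a"
    using matrix_inv_right[OF invertible_transpose_mult_self[OF assms]]
    by (simp only: matrix_vector_mul_assoc matrix_mul_assoc matrix_mul_lid)
  then show "transpose B *v (a - B *v ?s) = 0"
    by (simp add: matrix_vector_mult_diff_distrib)
qed

lemma affine_plane_slice_unique:
  fixes B C :: "real^'k^'n"
  assumes "invertible (transpose C ** B)"
    and "x \<in> range (\<lambda>t. a + B *v t)" "x' \<in> range (\<lambda>t. a + B *v t)"
    and "transpose C *v x = transpose C *v x'"
  shows "x = x'"
proof -
  obtain t where x': "x' = x + B *v t"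
    using assms(2,3) affine_plane_recenter by blast
  then have "(transpose C ** B) *v t = 0"
    using assms(4) by (simp add: matrix_vector_mul_assoc[symmetric] matrix_vector_right_distrib)
  then have "t = 0"
    using inj_matrix_vector_mult[OF assms(1)] by (metis injD matrix_vector_mult_0_right)
  then show ?thesis
    by (simp add: x')
qed

lemma continuous_affine_plane_slice:
  fixes B :: "real^'n \<Rightarrow> real^'k^'n" and C :: "real^'k^'n"
  assumes "continuous_on V B" "\<And>y. y \<in> V \<Longrightarrow> invertible (transpose C ** B y)"
  obtains w where "continuous_on V w"
    "\<And>y. y \<in> V \<Longrightarrow> w y \<in> range (\<lambda>t. y + B y *v t)"
    "\<And>y. y \<in> V \<Longrightarrow> transpose C *v w y = transpose C *v b"
proof
  define s where "s y = matrix_inv (transpose C ** B y) *v (transpose C *v (b - y))" for y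
  show "continuous_on V (\<lambda>y. y + B y *v s y)"
    unfolding s_def by (intro continuous_intros continuous_on_matrix_inv_mult assms)
  show "y + B y *v s y \<in> range (\<lambda>t. y + B y *v t)" for y
    by blast
  fix y assume "y \<in> V"
  then have "transpose C *v (B y *v s y) = transpose C *v (b - y)"
    using matrix_inv_right[OF assms(2)[OF \<open>y \<in> V\<close>]] unfolding s_def
    by (simp only: matrix_vector_mul_assoc matrix_mul_assoc matrix_mul_lid)
  then show "transpose C *v (y + B y *v s y) = transpose C *v b"
    by (simp add: matrix_vector_right_distrib matrix_vector_mult_diff_distrib)
qed

lemma dim_kernel_transpose:
  fixes B :: "real^'k^'n"
  assumes "inj ((*v) B)"
  shows "dim {v. transpose B *v v = 0} = CARD('n) - CARD('k)"
proof -
  have kernel: "{v. transpose B *v v = 0} = {v \<in> UNIV. \<forall>x \<in> range ((*v) B). orthogonal x v}"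
  proof (intro set_eqI iffI)
    fix v assume "v \<in> {v. transpose B *v v = 0}"
    then show "v \<in> {v \<in> UNIV. \<forall>x \<in> range ((*v) B). orthogonal x v}"
      using inner_transpose_mult[of _ B v] by (auto simp: orthogonal_def)
  next
    fix v assume "v \<in> {v \<in> UNIV. \<forall>x \<in> range ((*v) B). orthogonal x v}"
    then have "inner (transpose B *v v) (transpose B *v v) = 0"
      using inner_transpose_mult[of "transpose B *v v" B v] by (auto simp: orthogonal_def inner_commute)
    then show "v \<in> {v. transpose B *v v = 0}"
      by simp
  qed
  have "dim {v. transpose B *v v = 0} + dim (range ((*v) B)) = dim (UNIV :: (real^'n) set)"
    unfolding kernel
    by (rule dim_subspace_orthogonal_to_vectors)
       (auto simp: subspace_UNIV linear_subspace_image matrix_vector_mul_linear)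
  moreover have "dim (range ((*v) B)) = CARD('k)"
    using rank_dim_range[of B] full_rank_injective[of B] assms by simp
  ultimately show ?thesis
    by simp
qed

definition fiber_foot :: "(real^'n \<Rightarrow> (real^'n) set \<times> 'b) \<Rightarrow> real^'n \<Rightarrow> real^'n" where
  "fiber_foot F x = closest_point (fst (F x)) 0"

context
  fixes F :: "real^'n \<Rightarrow> (real^'n) set \<times> (real^'k^'n) set"
  assumes fibration: "oriented_plane_fibration F"
begin

lemma in_own_fiber: "x \<in> fst (F x)"
  using fibration unfolding oriented_plane_fibration_def by blast

lemma fiber_eqI: "y \<in> fst (F x) \<Longrightarrow> F y = F x"
  using fibration unfolding oriented_plane_fibration_def by blast

lemma fiber_local_frame:
  obtains U :: "(real^'n) set" and B :: "real^'n \<Rightarrow> real^'k^'n"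
  where "open U" "x \<in> U" "continuous_on U B"
    "\<And>y. y \<in> U \<Longrightarrow> inj ((*v) (B y))"
    "\<And>y. y \<in> U \<Longrightarrow> fst (F y) = range (\<lambda>t. y + B y *v t)"
proof -
  obtain U a B where U: "open U" "x \<in> U" "continuous_on U B"
    and local: "\<forall>y\<in>U. frame (B y) \<and> F y = oplane (a y) (B y)"
    using fibration unfolding oriented_plane_fibration_def by blast
  show ?thesis
  proof (rule that[OF U])
    fix y assume "y \<in> U"
    then show "inj ((*v) (B y))"
      using local unfolding frame_def by blast
    have "fst (F y) = range (\<lambda>t. a y + B y *v t)"
      using local \<open>y \<in> U\<close> by (simp add: oplane_def)
    moreover have "y \<in> fst (F y)"
      by (rule in_own_fiber)
    ultimately show "fst (F y) = range (\<lambda>t. y + B y *v t)"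
      by (simp add: affine_plane_recenter)
  qed
qed

lemma fiber_foot_eq:
  assumes "inj ((*v) B)" "fst (F y) = range (\<lambda>t. y + B *v t)"
  shows "fiber_foot F y = y - B *v (matrix_inv (transpose B ** B) *v (transpose B *v y))"
  unfolding fiber_foot_def assms(2) by (rule closest_point_0_affine_plane[OF assms(1)])

lemma fiber_foot_in_fiber: "fiber_foot F x \<in> fst (F x)"
proof -
  obtain U and B :: "real^'n \<Rightarrow> real^'k^'n" where "open U" "x \<in> U" "continuous_on U B"
    and "\<And>y. y \<in> U \<Longrightarrow> inj ((*v) (B y))"
    and "\<And>y. y \<in> U \<Longrightarrow> fst (F y) = range (\<lambda>t. y + B y *v t)"
    using fiber_local_frame[of x] by blast
  then show ?thesis
    by (simp add: fiber_foot_def closest_point_in_set affine_plane_closed_convex(1))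
qed

lemma fiber_fiber_foot: "F (fiber_foot F x) = F x"
  by (rule fiber_eqI[OF fiber_foot_in_fiber])

lemma fiber_foot_idem: "fiber_foot F (fiber_foot F x) = fiber_foot F x"
  unfolding fiber_foot_def fiber_fiber_foot[unfolded fiber_foot_def] ..

lemma continuous_fiber_foot: "continuous_on UNIV (fiber_foot F)"
proof -
  have "isCont (fiber_foot F) x" for x
  proof -
    obtain U and B :: "real^'n \<Rightarrow> real^'k^'n" where U: "open U" "x \<in> U" "continuous_on U B"
      and frame: "\<And>y. y \<in> U \<Longrightarrow> inj ((*v) (B y))"
      and fiber: "\<And>y. y \<in> U \<Longrightarrow> fst (F y) = range (\<lambda>t. y + B y *v t)"
      using fiber_local_frame[of x] by blast
    have "continuous_on U (\<lambda>y. y - B y *v (matrix_inv (transpose (B y) ** B y) *v (transpose (B y) *v y)))"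
      using frame invertible_transpose_mult_self
      by (intro continuous_intros continuous_on_matrix_inv_mult U(3)) auto
    then have "continuous_on U (fiber_foot F)"
      by (rule continuous_on_eq) (simp only: fiber_foot_eq[OF frame fiber])
    then show ?thesis
      using U(1,2) continuous_on_eq_continuous_at by blast
  qed
  then show ?thesis
    by (simp add: continuous_on_eq_continuous_at)
qed

lemma range_fiber_foot_retract: "range (fiber_foot F) retract_of UNIV"
  unfolding retract_of_def retraction_def
  using continuous_fiber_foot fiber_foot_idem by auto

lemma fiber_foot_slice_homeomorphism:
  assumes "open V" "continuous_on V w"
    and w_fiber: "\<And>y. y \<in> V \<Longrightarrow> w y \<in> fst (F y)"
    and w_slice: "\<And>y. y \<in> V \<Longrightarrow> w y - y0 \<in> N"
    and unique: "\<And>y x. y \<in> V \<Longrightarrow> x \<in> fst (F y) \<Longrightarrow> x - y0 \<in> N \<Longrightarrow> x = w y"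
  defines "W \<equiv> {v \<in> N. fiber_foot F (y0 + v) \<in> V}"
  shows "openin (top_of_set N) W"
    and "homeomorphism (range (fiber_foot F) \<inter> V) W (\<lambda>y. w y - y0) (\<lambda>v. fiber_foot F (y0 + v))"
proof -
  let ?f = "\<lambda>y. w y - y0" and ?g = "\<lambda>v. fiber_foot F (y0 + v)"
  have cont: "continuous_on UNIV ?g"
    by (intro continuous_on_compose2[OF continuous_fiber_foot] continuous_intros) auto
  have "W = N \<inter> ?g -` V"
    unfolding W_def by blast
  with open_vimage[OF \<open>open V\<close> cont] show "openin (top_of_set N) W"
    by (simp add: openin_open_Int)
  have foot_w: "fiber_foot F (w y) = y" if "y \<in> range (fiber_foot F) \<inter> V" for y
  proof -
    have "F (w y) = F y"
      using that by (simp add: fiber_eqI[OF w_fiber])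
    then have "fiber_foot F (w y) = fiber_foot F y"
      by (simp add: fiber_foot_def)
    also have "\<dots> = y"
      using that fiber_foot_idem by auto
    finally show ?thesis .
  qed
  have w_foot: "w (?g v) = y0 + v" if "v \<in> W" for v
  proof (rule unique[symmetric])
    show "?g v \<in> V" "(y0 + v) - y0 \<in> N"
      using that unfolding W_def by auto
    show "y0 + v \<in> fst (F (?g v))"
      using in_own_fiber by (simp add: fiber_fiber_foot)
  qed
  show "homeomorphism (range (fiber_foot F) \<inter> V) W ?f ?g"
  proof (rule homeomorphismI)
    show "continuous_on (range (fiber_foot F) \<inter> V) ?f"
      by (intro continuous_intros continuous_on_subset[OF assms(2)]) auto
    show "continuous_on W ?g"
      using cont continuous_on_subset by blast
    show "?f ` (range (fiber_foot F) \<inter> V) \<subseteq> W"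
      using foot_w w_slice unfolding W_def by auto
    show "?g ` W \<subseteq> range (fiber_foot F) \<inter> V"
      unfolding W_def by auto
  qed (simp_all add: foot_w w_foot)
qed

lemma fiber_local_transversal:
  obtains N :: "(real^'n) set" and V w
  where "subspace N" "dim N = CARD('n) - CARD('k)" "open V" "y0 \<in> V" "continuous_on V w"
    "\<And>y. y \<in> V \<Longrightarrow> w y \<in> fst (F y)"
    "\<And>y. y \<in> V \<Longrightarrow> w y - y0 \<in> N"
    "\<And>y x. y \<in> V \<Longrightarrow> x \<in> fst (F y) \<Longrightarrow> x - y0 \<in> N \<Longrightarrow> x = w y"
proof -
  obtain U and B :: "real^'n \<Rightarrow> real^'k^'n" where U: "open U" "y0 \<in> U" "continuous_on U B"
    and frame: "\<And>y. y \<in> U \<Longrightarrow> inj ((*v) (B y))"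
    and fiber: "\<And>y. y \<in> U \<Longrightarrow> fst (F y) = range (\<lambda>t. y + B y *v t)"
    using fiber_local_frame[of y0] by blast
  define N where "N = {v. transpose (B y0) *v v = 0}"
  define V where "V = {y \<in> U. invertible (transpose (B y0) ** B y)}"
  have inv: "invertible (transpose (B y0) ** B y)" if "y \<in> V" for y
    using that unfolding V_def by blast
  have "continuous_on V B"
    by (rule continuous_on_subset[OF U(3)]) (auto simp: V_def)
  then obtain w where w: "continuous_on V w"
    "\<And>y. y \<in> V \<Longrightarrow> w y \<in> range (\<lambda>t. y + B y *v t)"
    "\<And>y. y \<in> V \<Longrightarrow> transpose (B y0) *v w y = transpose (B y0) *v y0"
    using continuous_affine_plane_slice[where b = y0] inv by blast
  have slice: "x - y0 \<in> N \<longleftrightarrow> transpose (B y0) *v x = transpose (B y0) *v y0" for x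
    unfolding N_def mem_Collect_eq matrix_vector_mult_diff_distrib by (rule right_minus_eq)
  show ?thesis
  proof (rule that[OF _ _ _ _ w(1)])
    show "subspace N"
      unfolding N_def by (rule linear_subspace_kernel[OF matrix_vector_mul_linear])
    show "dim N = CARD('n) - CARD('k)"
      unfolding N_def by (rule dim_kernel_transpose[OF frame[OF U(2)]])
    show "open V"
      unfolding V_def by (intro open_invertible_locus continuous_intros U)
    show "y0 \<in> V"
      unfolding V_def mem_Collect_eq using U(2) invertible_transpose_mult_self[OF frame[OF U(2)]] ..
    show "w y \<in> fst (F y)" if "y \<in> V" for y
      using w(2)[OF that] fiber that unfolding V_def by auto
    show "w y - y0 \<in> N" if "y \<in> V" for y
      using w(3)[OF that] by (simp add: slice)
    show "x = w y" if "y \<in> V" "x \<in> fst (F y)" "x - y0 \<in> N" for x y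
    proof (rule affine_plane_slice_unique[OF inv[OF that(1)]])
      show "x \<in> range (\<lambda>t. y + B y *v t)" "w y \<in> range (\<lambda>t. y + B y *v t)"
        using that(2) w(2)[OF that(1)] fiber that(1) unfolding V_def by auto
      show "transpose (B y0) *v x = transpose (B y0) *v w y"
        using that(3) w(3)[OF that(1)] by (simp add: slice)
    qed
  qed
qed

lemma top_submanifold_range_fiber_foot:
  "top_submanifold (CARD('n) - CARD('k)) (range (fiber_foot F))"
  unfolding top_submanifold_def
proof
  fix y0 assume "y0 \<in> range (fiber_foot F)"
  obtain N :: "(real^'n) set" and V w
    where N: "subspace N" "dim N = CARD('n) - CARD('k)" and "open V" "y0 \<in> V"
      and w: "continuous_on V w" "\<And>y. y \<in> V \<Longrightarrow> w y \<in> fst (F y)"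
        "\<And>y. y \<in> V \<Longrightarrow> w y - y0 \<in> N"
        "\<And>y x. y \<in> V \<Longrightarrow> x \<in> fst (F y) \<Longrightarrow> x - y0 \<in> N \<Longrightarrow> x = w y"
    using fiber_local_transversal[of y0] by blast
  define W where "W = {v \<in> N. fiber_foot F (y0 + v) \<in> V}"
  note chart = fiber_foot_slice_homeomorphism[OF \<open>open V\<close> w, folded W_def]
  show "\<exists>V'. openin (top_of_set (range (fiber_foot F))) V' \<and> y0 \<in> V' \<and>
      (\<exists>(T::(real^'n) set) W. subspace T \<and> dim T = CARD('n) - CARD('k) \<and>
         openin (top_of_set T) W \<and> V' homeomorphic W)"
  proof (intro exI conjI)
    show "openin (top_of_set (range (fiber_foot F))) (range (fiber_foot F) \<inter> V)"
      using \<open>open V\<close> by (rule openin_open_Int)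
    show "range (fiber_foot F) \<inter> V homeomorphic W"
      using chart(2) homeomorphic_def by blast
  qed (use N \<open>y0 \<in> V\<close> \<open>y0 \<in> range (fiber_foot F)\<close> chart(1) in auto)
qed

end

theorem lemma3p1:
  fixes F :: "real^'n \<Rightarrow> (real^'n) set \<times> (real^'k^'n) set"
  assumes "oriented_plane_fibration F"
  defines "p \<equiv> (\<lambda>x. closest_point (fst (F x)) 0)"
  shows "connected (range p) \<and> contractible (range p) \<and>
         top_submanifold (CARD('n) - CARD('k)) (range p)"
proof -
  have p: "p = fiber_foot F"
    unfolding p_def by (simp add: fun_eq_iff fiber_foot_def)
  show ?thesis
    unfolding p
    using connected_continuous_image[OF continuous_fiber_foot[OF assms(1)] connected_UNIV]
      retract_of_contractible[OF contractible_UNIV range_fiber_foot_retract[OF assms(1)]]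
      top_submanifold_range_fiber_foot[OF assms(1)]
    by blast
qed

end
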